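(* Let $X,Y,Z$ be random variables on finite alphabets $\mathcal{X},\mathcal{Y},\mathcal{Z}$. For each $y\in\mathcal{Y}$ with $\Pr(Y=y)>0$, let $(A_y,B_y,C_y)$ be the random triple on $\mathcal{X}\times\mathcal{Y}\times\mathcal{Z}$ with $\Pr(A_y=x,B_y=y',C_y=z)=0$ if $\Pr(Z=z)=0$ and $\Pr(A_y=x,B_y=y',C_y=z)=\Pr(X=x,Y=y',Z=z)\Pr(Z=z\mid Y=y)/\Pr(Z=z)$ otherwise. Let $A_{Z|Y}$ be a random variable on $\mathcal{X}$, jointly distributed with $Y$, such that $\Pr(A_{Z|Y}=x,Y=y)=\Pr(Y=y)\Pr(A_y=x)$ for all $x\in\mathcal{X}$ and all $y$ with $\Pr(Y=y)>0$. Let $\operatorname{Un}(X\to Z\mid Y)=\sum_{y:\Pr(Y=y)>0}\Pr(Y=y)I(A_y;C_y)$ and $\operatorname{Red}(X,Y\to Z)=I(X;Z)-\operatorname{Un}(X\to Z\mid Y)$. Then $\operatorname{Red}(X,Y\to Z)=I(A_{Z|Y};Y)$.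
   Context: $I$ denotes mutual information. *)

theory Defs
  imports "HOL-Probability.Probability"
begin

definition mi_fun :: "('a::finite \<times> 'b::finite \<Rightarrow> real) \<Rightarrow> real" where
  "mi_fun f = (\<Sum>a\<in>UNIV. \<Sum>b\<in>UNIV. if f (a, b) = 0 then 0
      else f (a, b) * log 2 (f (a, b) / ((\<Sum>b'\<in>UNIV. f (a, b')) * (\<Sum>a'\<in>UNIV. f (a', b)))))"

definition mutual_info :: "('a::finite \<times> 'b::finite) pmf \<Rightarrow> real" where
  "mutual_info q = mi_fun (pmf q)"

definition pY :: "('x \<times> 'y \<times> 'z) pmf \<Rightarrow> 'y \<Rightarrow> real" where
  "pY P y = pmf (map_pmf (\<lambda>(x, y, z). y) P) y"

definition pZ :: "('x \<times> 'y \<times> 'z) pmf \<Rightarrow> 'z \<Rightarrow> real" where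
  "pZ P z = pmf (map_pmf (\<lambda>(x, y, z). z) P) z"

definition pYZ :: "('x \<times> 'y \<times> 'z) pmf \<Rightarrow> 'y \<Rightarrow> 'z \<Rightarrow> real" where
  "pYZ P y z = pmf (map_pmf (\<lambda>(x, y, z). (y, z)) P) (y, z)"

definition condZY :: "('x \<times> 'y \<times> 'z) pmf \<Rightarrow> 'z \<Rightarrow> 'y \<Rightarrow> real" where
  "condZY P z y = pYZ P y z / pY P y"

definition triple :: "('x \<times> 'y \<times> 'z) pmf \<Rightarrow> 'y \<Rightarrow> 'x \<times> 'y \<times> 'z \<Rightarrow> real" where
  "triple P y = (\<lambda>(x, y', z). if pZ P z = 0 then 0
                   else pmf P (x, y', z) * condZY P z y / pZ P z)"

definition pA :: "('x \<times> 'y::finite \<times> 'z::finite) pmf \<Rightarrow> 'y \<Rightarrow> 'x \<Rightarrow> real" where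
  "pA P y x = (\<Sum>y'\<in>UNIV. \<Sum>z\<in>UNIV. triple P y (x, y', z))"

definition I_AC :: "('x::finite \<times> 'y::finite \<times> 'z::finite) pmf \<Rightarrow> 'y \<Rightarrow> real" where
  "I_AC P y = mi_fun (\<lambda>(x, z). \<Sum>y'\<in>UNIV. triple P y (x, y', z))"

definition UnI :: "('x::finite \<times> 'y::finite \<times> 'z::finite) pmf \<Rightarrow> real" where
  "UnI P = (\<Sum>y\<in>{y. pY P y > 0}. pY P y * I_AC P y)"

definition Red :: "('x::finite \<times> 'y::finite \<times> 'z::finite) pmf \<Rightarrow> real" where
  "Red P = mutual_info (map_pmf (\<lambda>(x, y, z). (x, z)) P) - UnI P"

end

theory Submission
  imports Defs
begin

text \<open>Write \<open>p\<close> for the law of \<open>(X, Y, Z)\<close>. The pair \<open>(A\<^sub>y, C\<^sub>y)\<close> is obtained by drawing \<open>C\<^sub>y\<close>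
  from \<open>p(z | y)\<close> and then \<open>A\<^sub>y\<close> through the channel \<open>p(x | z)\<close>, so
  \<open>I(A\<^sub>y; C\<^sub>y) = H(A\<^sub>y) - \<Sum>\<^sub>z p(z | y) H(X | Z = z)\<close>. Averaging over \<open>y\<close>, and using
  \<open>\<Sum>\<^sub>y p(y) p(z | y) = p(z)\<close>, gives \<open>Un = \<Sum>\<^sub>y p(y) H(A\<^sub>y) - H(X | Z)\<close>, hence
  \<open>Red = H(X) - \<Sum>\<^sub>y p(y) H(A\<^sub>y)\<close>. Since \<open>A\<^sub>Z\<^sub>|\<^sub>Y\<close> has marginal \<open>p(x)\<close> and conditional law
  \<open>A\<^sub>y\<close> given \<open>Y = y\<close>, this is exactly \<open>I(A\<^sub>Z\<^sub>|\<^sub>Y; Y)\<close>.\<close>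

definition plogp :: "real \<Rightarrow> real" where
  "plogp t = t * log 2 t"

lemma plogp_0 [simp]: "plogp 0 = 0"
  by (simp add: plogp_def)

lemma plogp_mult:
  assumes "0 \<le> a" "0 \<le> b"
  shows "plogp (a * b) = a * plogp b + b * plogp a"
  using assms by (cases "a = 0 \<or> b = 0") (auto simp: plogp_def log_mult_pos algebra_simps)

lemma mi_fun_eq_plogp:
  fixes f :: "'a::finite \<times> 'b::finite \<Rightarrow> real"
  assumes nonneg: "\<And>a b. f (a, b) \<ge> 0"
  shows "mi_fun f = (\<Sum>a\<in>UNIV. \<Sum>b\<in>UNIV. plogp (f (a, b)))
      - (\<Sum>a\<in>UNIV. plogp (\<Sum>b\<in>UNIV. f (a, b))) - (\<Sum>b\<in>UNIV. plogp (\<Sum>a\<in>UNIV. f (a, b)))"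
proof -
  define fa where "fa a = (\<Sum>b\<in>UNIV. f (a, b))" for a
  define fb where "fb b = (\<Sum>a\<in>UNIV. f (a, b))" for b
  have term_eq: "(if f (a, b) = 0 then 0 else f (a, b) * log 2 (f (a, b) / (fa a * fb b)))
     = plogp (f (a, b)) - f (a, b) * log 2 (fa a) - f (a, b) * log 2 (fb b)" for a b
  proof (cases "f (a, b) = 0")
    case False
    then have pos: "f (a, b) > 0" using nonneg[of a b] by linarith
    moreover have "f (a, b) \<le> fa a" "f (a, b) \<le> fb b"
      unfolding fa_def fb_def
      by (rule member_le_sum[where f = "\<lambda>b. f (a, b)"] member_le_sum[where f = "\<lambda>a. f (a, b)"];
          simp add: nonneg)+
    ultimately have "fa a > 0" "fb b > 0" by linarith+
    with pos show ?thesis by (simp add: plogp_def log_divide_pos log_mult_pos algebra_simps)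
  qed (simp add: plogp_def)
  have "(\<Sum>a\<in>UNIV. \<Sum>b\<in>UNIV. f (a, b) * log 2 (fa a)) = (\<Sum>a\<in>UNIV. plogp (fa a))"
    by (simp add: plogp_def fa_def sum_distrib_right)
  moreover have "(\<Sum>a\<in>UNIV. \<Sum>b\<in>UNIV. f (a, b) * log 2 (fb b)) = (\<Sum>b\<in>UNIV. plogp (fb b))"
    by (subst sum.swap) (simp add: plogp_def fb_def sum_distrib_right)
  ultimately show ?thesis
    unfolding mi_fun_def fa_def[symmetric] fb_def[symmetric] term_eq by (simp add: sum_subtractf)
qed

text \<open>For the joint law \<open>w(b) k(b, a)\<close> of \<open>(A, B)\<close> this is \<open>I(A; B) = H(A) - H(A | B)\<close>.\<close>

lemma mi_fun_channel:
  fixes w :: "'b::finite \<Rightarrow> real" and k :: "'b \<Rightarrow> 'a::finite \<Rightarrow> real"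
  assumes w_nonneg: "\<And>b. w b \<ge> 0" and k_nonneg: "\<And>b a. k b a \<ge> 0"
    and k_sum: "\<And>b. w b > 0 \<Longrightarrow> (\<Sum>a\<in>UNIV. k b a) = 1"
  shows "mi_fun (\<lambda>(a, b). w b * k b a)
    = (\<Sum>b\<in>UNIV. w b * (\<Sum>a\<in>UNIV. plogp (k b a))) - (\<Sum>a\<in>UNIV. plogp (\<Sum>b\<in>UNIV. w b * k b a))"
proof -
  have row: "(\<Sum>a\<in>UNIV. plogp (w b * k b a)) = w b * (\<Sum>a\<in>UNIV. plogp (k b a)) + plogp (w b)" for b
  proof (cases "w b > 0")
    case True
    then show ?thesis
      using w_nonneg k_nonneg
      by (simp add: plogp_mult sum.distrib sum_distrib_left flip: sum_distrib_right k_sum)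
  next
    case False
    then show ?thesis using w_nonneg[of b] by simp
  qed
  have col: "(\<Sum>a\<in>UNIV. w b * k b a) = w b" for b
    using k_sum[of b] w_nonneg[of b] by (cases "w b > 0") (auto simp flip: sum_distrib_left)
  show ?thesis
    using w_nonneg k_nonneg
    by (subst mi_fun_eq_plogp) (simp_all add: sum.swap[of _ UNIV UNIV] row col sum.distrib)
qed

lemma pmf_map_eq_sum_fiber:
  assumes "f -` {b} = g ` A" "finite A" "inj_on g A"
  shows "pmf (map_pmf f Q) b = (\<Sum>a\<in>A. pmf Q (g a))"
  using assms by (simp add: pmf_map measure_measure_pmf_finite sum.reindex)

lemma pmf_map_fst_finite:
  fixes Q :: "('a \<times> 'b::finite) pmf"
  shows "pmf (map_pmf fst Q) a = (\<Sum>b\<in>UNIV. pmf Q (a, b))"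
  by (rule pmf_map_eq_sum_fiber) (auto simp: inj_on_def)

lemma pmf_map_snd_finite:
  fixes Q :: "('a::finite \<times> 'b) pmf"
  shows "pmf (map_pmf snd Q) b = (\<Sum>a\<in>UNIV. pmf Q (a, b))"
  by (rule pmf_map_eq_sum_fiber) (auto simp: inj_on_def)

definition pXZ :: "('x \<times> 'y \<times> 'z) pmf \<Rightarrow> 'x \<Rightarrow> 'z \<Rightarrow> real" where
  "pXZ P x z = pmf (map_pmf (\<lambda>(x, y, z). (x, z)) P) (x, z)"

lemma pXZ_eq_sum:
  fixes P :: "('x \<times> 'y::finite \<times> 'z) pmf"
  shows "pXZ P x z = (\<Sum>y\<in>UNIV. pmf P (x, y, z))"
  unfolding pXZ_def by (rule pmf_map_eq_sum_fiber) (auto simp: inj_on_def)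

lemma pY_eq_sum_pYZ:
  fixes P :: "('x \<times> 'y \<times> 'z::finite) pmf"
  shows "pY P y = (\<Sum>z\<in>UNIV. pYZ P y z)"
proof -
  have "map_pmf (\<lambda>(x, y, z). y) P = map_pmf fst (map_pmf (\<lambda>(x, y, z). (y, z)) P)"
    unfolding map_pmf_comp by (auto intro: map_pmf_cong)
  then show ?thesis by (simp add: pY_def pYZ_def pmf_map_fst_finite)
qed

lemma pZ_eq_sum_pYZ:
  fixes P :: "('x \<times> 'y::finite \<times> 'z) pmf"
  shows "pZ P z = (\<Sum>y\<in>UNIV. pYZ P y z)"
proof -
  have "map_pmf (\<lambda>(x, y, z). z) P = map_pmf snd (map_pmf (\<lambda>(x, y, z). (y, z)) P)"
    unfolding map_pmf_comp by (auto intro: map_pmf_cong)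
  then show ?thesis by (simp add: pZ_def pYZ_def pmf_map_snd_finite)
qed

lemma pZ_eq_sum_pXZ:
  fixes P :: "('x::finite \<times> 'y \<times> 'z) pmf"
  shows "pZ P z = (\<Sum>x\<in>UNIV. pXZ P x z)"
proof -
  have "map_pmf (\<lambda>(x, y, z). z) P = map_pmf snd (map_pmf (\<lambda>(x, y, z). (x, z)) P)"
    unfolding map_pmf_comp by (auto intro: map_pmf_cong)
  then show ?thesis by (simp add: pZ_def pXZ_def pmf_map_snd_finite)
qed

lemma pmf_eq_0_if_sum_pmf_eq_1:
  assumes "finite A" "sum (pmf Q) A = 1" "a \<notin> A"
  shows "pmf Q a = 0"
proof -
  have "measure_pmf.prob Q A = 1"
    using assms(1,2) by (simp add: measure_measure_pmf_finite)
  then have "AE x in measure_pmf Q. x \<in> A"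
    by (simp add: measure_pmf.prob_eq_1)
  with assms(3) show ?thesis
    by (auto simp: AE_measure_pmf_iff set_pmf_eq)
qed

definition condXZ :: "('x \<times> 'y \<times> 'z) pmf \<Rightarrow> 'x \<Rightarrow> 'z \<Rightarrow> real" where
  "condXZ P x z = pXZ P x z / pZ P z"

lemma condXZ_nonneg: "condXZ P x z \<ge> 0"
  by (simp add: condXZ_def pXZ_def pZ_def)

lemma condZY_nonneg: "condZY P z y \<ge> 0"
  by (simp add: condZY_def pYZ_def pY_def)

lemma pY_nonneg: "pY P y \<ge> 0"
  by (simp add: pY_def)

lemma pZ_nonneg: "pZ P z \<ge> 0"
  by (simp add: pZ_def)

context
  fixes P :: "('x::finite \<times> 'y::finite \<times> 'z::finite) pmf"
begin

lemma pXZ_le_pZ: "pXZ P x z \<le> pZ P z"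
  unfolding pZ_eq_sum_pXZ by (rule member_le_sum) (auto simp: pXZ_def)

lemma pYZ_le_pZ: "pYZ P y z \<le> pZ P z"
  unfolding pZ_eq_sum_pYZ by (rule member_le_sum) (auto simp: pYZ_def)

lemma pYZ_le_pY: "pYZ P y z \<le> pY P y"
  unfolding pY_eq_sum_pYZ by (rule member_le_sum) (auto simp: pYZ_def)

lemma pZ_mult_condXZ: "pZ P z * condXZ P x z = pXZ P x z"
  using pXZ_le_pZ[of x z] by (auto simp: condXZ_def pXZ_def)

lemma pY_mult_condZY: "pY P y * condZY P z y = pYZ P y z"
  using pYZ_le_pY[of y z] by (auto simp: condZY_def pYZ_def)

lemma sum_condXZ: "pZ P z > 0 \<Longrightarrow> (\<Sum>x\<in>UNIV. condXZ P x z) = 1"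
  by (simp add: condXZ_def pZ_eq_sum_pXZ flip: sum_divide_distrib)

lemma sum_condZY: "pY P y > 0 \<Longrightarrow> (\<Sum>z\<in>UNIV. condZY P z y) = 1"
  by (simp add: condZY_def pY_eq_sum_pYZ flip: sum_divide_distrib)

lemma pZ_pos_if_condZY_pos:
  assumes "condZY P z y > 0"
  shows "pZ P z > 0"
proof -
  have "pYZ P y z > 0"
    using assms by (auto simp: condZY_def zero_less_divide_iff pYZ_def)
  with pYZ_le_pZ[of y z] show ?thesis by linarith
qed

lemma sum_triple_middle: "(\<Sum>y'\<in>UNIV. triple P y (x, y', z)) = condZY P z y * condXZ P x z"
proof (cases "pZ P z = 0")
  case True
  then show ?thesis by (simp add: triple_def condXZ_def)
next
  case False
  then show ?thesis
    by (simp add: triple_def condXZ_def pXZ_eq_sum flip: sum_divide_distrib sum_distrib_right)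
qed

lemma pA_eq_sum: "pA P y x = (\<Sum>z\<in>UNIV. condZY P z y * condXZ P x z)"
  unfolding pA_def by (subst sum.swap) (simp add: sum_triple_middle)

lemma sum_pA:
  assumes "pY P y > 0"
  shows "(\<Sum>x\<in>UNIV. pA P y x) = 1"
proof -
  have row: "condZY P z y * (\<Sum>x\<in>UNIV. condXZ P x z) = condZY P z y" for z
    using sum_condXZ[OF pZ_pos_if_condZY_pos, of z y] condZY_nonneg[of P z y]
    by (cases "condZY P z y > 0") auto
  have "(\<Sum>x\<in>UNIV. pA P y x) = (\<Sum>z\<in>UNIV. condZY P z y * (\<Sum>x\<in>UNIV. condXZ P x z))"
    unfolding pA_eq_sum sum_distrib_left by (rule sum.swap)
  also have "\<dots> = 1"
    by (simp add: row sum_condZY[OF assms])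
  finally show ?thesis .
qed

lemma sum_pY_mult_condZY: "(\<Sum>y\<in>UNIV. pY P y * condZY P z y) = pZ P z"
  by (simp add: pY_mult_condZY pZ_eq_sum_pYZ)

lemma sum_pY_mult_pA: "(\<Sum>y\<in>UNIV. pY P y * pA P y x) = (\<Sum>z\<in>UNIV. pXZ P x z)"
proof -
  have "(\<Sum>y\<in>UNIV. pY P y * pA P y x) = (\<Sum>z\<in>UNIV. \<Sum>y\<in>UNIV. pY P y * condZY P z y * condXZ P x z)"
    unfolding pA_eq_sum sum_distrib_left mult.assoc by (rule sum.swap)
  also have "\<dots> = (\<Sum>z\<in>UNIV. pZ P z * condXZ P x z)"
    by (simp add: sum_pY_mult_condZY flip: sum_distrib_right)
  finally show ?thesis by (simp add: pZ_mult_condXZ)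
qed

lemma pA_nonneg: "pA P y x \<ge> 0"
  by (simp add: pA_eq_sum sum_nonneg condXZ_nonneg condZY_nonneg)

lemma sum_pY: "(\<Sum>y\<in>UNIV. pY P y) = 1"
  unfolding pY_def by (rule sum_pmf_eq_1) auto

lemma sum_pY_pos: "(\<Sum>y | pY P y > 0. pY P y) = 1"
proof -
  have "(\<Sum>y | pY P y > 0. pY P y) = (\<Sum>y\<in>UNIV. pY P y)"
    by (rule sum.mono_neutral_left) (auto simp: pY_nonneg order_less_le)
  then show ?thesis by (simp add: sum_pY)
qed

lemma mutual_info_XZ:
  "mutual_info (map_pmf (\<lambda>(x, y, z). (x, z)) P)
    = (\<Sum>z\<in>UNIV. pZ P z * (\<Sum>x\<in>UNIV. plogp (condXZ P x z))) - (\<Sum>x\<in>UNIV. plogp (\<Sum>z\<in>UNIV. pXZ P x z))"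
proof -
  have pmf_XZ: "pmf (map_pmf (\<lambda>(x, y, z). (x, z)) P) = (\<lambda>(x, z). pZ P z * condXZ P x z)"
    by (auto simp: pZ_mult_condXZ pXZ_def)
  show ?thesis
    unfolding mutual_info_def pmf_XZ
    by (subst mi_fun_channel) (simp_all add: condXZ_nonneg sum_condXZ pZ_mult_condXZ pZ_nonneg)
qed

lemma I_AC_eq:
  "I_AC P y = (\<Sum>z\<in>UNIV. condZY P z y * (\<Sum>x\<in>UNIV. plogp (condXZ P x z))) - (\<Sum>x\<in>UNIV. plogp (pA P y x))"
proof -
  have "I_AC P y = mi_fun (\<lambda>(x, z). condZY P z y * condXZ P x z)"
    by (simp add: I_AC_def sum_triple_middle)
  then show ?thesis
    by (simp add: mi_fun_channel condXZ_nonneg condZY_nonneg sum_condXZ pZ_pos_if_condZY_pos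
        flip: pA_eq_sum)
qed

lemma UnI_eq:
  "UnI P = (\<Sum>z\<in>UNIV. pZ P z * (\<Sum>x\<in>UNIV. plogp (condXZ P x z)))
    - (\<Sum>y\<in>UNIV. pY P y * (\<Sum>x\<in>UNIV. plogp (pA P y x)))"
proof -
  define S where "S z = (\<Sum>x\<in>UNIV. plogp (condXZ P x z))" for z
  define T where "T y = (\<Sum>x\<in>UNIV. plogp (pA P y x))" for y
  have "UnI P = (\<Sum>y\<in>UNIV. pY P y * I_AC P y)"
    unfolding UnI_def by (rule sum.mono_neutral_left) (auto simp: pY_nonneg order_less_le)
  also have "\<dots> = (\<Sum>y\<in>UNIV. \<Sum>z\<in>UNIV. pY P y * condZY P z y * S z) - (\<Sum>y\<in>UNIV. pY P y * T y)"
    by (simp add: I_AC_eq flip: S_def T_def)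
      (simp add: right_diff_distrib sum_subtractf sum_distrib_left mult.assoc)
  also have "(\<Sum>y\<in>UNIV. \<Sum>z\<in>UNIV. pY P y * condZY P z y * S z) = (\<Sum>z\<in>UNIV. pZ P z * S z)"
    by (subst sum.swap) (simp add: sum_pY_mult_condZY flip: sum_distrib_right)
  finally show ?thesis by (simp add: S_def T_def)
qed

lemma pmf_eq_pY_mult_pA:
  fixes R :: "('x \<times> 'y) pmf"
  assumes "\<forall>x y. pY P y > 0 \<longrightarrow> pmf R (x, y) = pY P y * pA P y x"
  shows "pmf R (x, y) = pY P y * pA P y x"
proof (cases "pY P y > 0")
  case True
  with assms show ?thesis by simp
next
  case False
  then have "pY P y = 0" by (simp add: pY_nonneg order_less_le)
  have "sum (pmf R) (UNIV \<times> {y. pY P y > 0}) = (\<Sum>x\<in>UNIV. \<Sum>y | pY P y > 0. pmf R (x, y))"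
    by (simp add: sum.cartesian_product)
  also have "\<dots> = (\<Sum>y | pY P y > 0. \<Sum>x\<in>UNIV. pmf R (x, y))"
    by (rule sum.swap)
  also have "\<dots> = (\<Sum>y | pY P y > 0. pY P y * (\<Sum>x\<in>UNIV. pA P y x))"
    using assms by (simp add: sum_distrib_left)
  also have "\<dots> = 1"
    by (simp add: sum_pA sum_pY_pos)
  finally have "pmf R (x, y) = 0"
    by (rule pmf_eq_0_if_sum_pmf_eq_1[rotated]) (use False in auto)
  with \<open>pY P y = 0\<close> show ?thesis by simp
qed

lemma mutual_info_eq_if_pmf_eq_pY_mult_pA:
  fixes R :: "('x \<times> 'y) pmf"
  assumes "\<And>x y. pmf R (x, y) = pY P y * pA P y x"
  shows "mutual_info R
    = (\<Sum>y\<in>UNIV. pY P y * (\<Sum>x\<in>UNIV. plogp (pA P y x))) - (\<Sum>x\<in>UNIV. plogp (\<Sum>z\<in>UNIV. pXZ P x z))"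
proof -
  have "pmf R = (\<lambda>(x, y). pY P y * pA P y x)"
    using assms by auto
  then show ?thesis
    unfolding mutual_info_def
    by (simp add: mi_fun_channel pA_nonneg sum_pA sum_pY_mult_pA pY_nonneg)
qed

end

theorem lemma6:
  fixes P :: "('x::finite \<times> 'y::finite \<times> 'z::finite) pmf"
    and R :: "('x \<times> 'y) pmf"
  assumes "\<forall>x y. pY P y > 0 \<longrightarrow> pmf R (x, y) = pY P y * pA P y x"
  shows "Red P = mutual_info R"
  unfolding Red_def mutual_info_XZ UnI_eq
    mutual_info_eq_if_pmf_eq_pY_mult_pA[OF pmf_eq_pY_mult_pA[OF assms]]
  by simp

end
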